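(* Let $n$ be a positive integer. Every partition $x\in C_2(n)$ is either a Metropolis 2-partition of $n$ or an extension of some Metropolis 2-partition $y$ of some integer $m<n$.
   Context: A partition of $n$ is identified with a point $x=(x_1,\dots,x_n)\in\mathbb{Z}_{\ge 0}^n$ satisfying $x_1+2x_2+\dots+nx_n=n$, where $x_i$ is the number of parts equal to $i$. Let $P(n)$ be the set of partitions of $n$ and $P_n=\mathrm{conv}\,P(n)\subset\mathbb{R}^n$. $C_2(n)$ is the set of partitions $x\in P(n)$ that are not vertices of $P_n$ and can be written as $x=\lambda y+(1-\lambda)z$ with $y,z\in P(n)$ different from $x$ and $0<\lambda<1$. For an even positive integer $m$, a Metropolis 2-partition of $m$ is a partition of $m$ obtained by joining (taking the multiset union of the parts of) two, not necessarily different, partitions of $m/2$. A partition $x$ of $n$ is an extension of a partition $y$ of $m<n$ if every part of $y$ is a part of $x$. *)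

theory Defs
  imports "HOL-Analysis.Analysis"
begin

text \<open>A partition of n is its multiplicity vector x, x i = number of parts equal to i
  (coordinates i in {1..n}; all other coordinates are 0).\<close>
definition partitions :: "nat \<Rightarrow> (nat \<Rightarrow> nat) set" where
  "partitions n = {x. (\<forall>i. x i \<noteq> 0 \<longrightarrow> i \<in> {1..n}) \<and> (\<Sum>i=1..n. i * x i) = n}"

definition pt :: "(nat \<Rightarrow> nat) \<Rightarrow> nat \<Rightarrow> real" where
  "pt x = (\<lambda>i. real (x i))"

definition conv_hull :: "(nat \<Rightarrow> real) set \<Rightarrow> (nat \<Rightarrow> real) set" where
  "conv_hull S = {p. \<exists>F c. finite F \<and> F \<subseteq> S \<and> (\<forall>u\<in>F. 0 \<le> c u) \<and> sum c F = 1
                      \<and> p = (\<lambda>i. \<Sum>u\<in>F. c u * u i)}"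

definition is_vertex :: "(nat \<Rightarrow> real) set \<Rightarrow> (nat \<Rightarrow> real) \<Rightarrow> bool" where
  "is_vertex K p \<longleftrightarrow> p \<in> K \<and>
     \<not> (\<exists>a\<in>K. \<exists>b\<in>K. a \<noteq> b \<and> (\<exists>t. 0 < t \<and> t < 1 \<and> p = (\<lambda>i. t * a i + (1 - t) * b i)))"

definition partition_polytope :: "nat \<Rightarrow> (nat \<Rightarrow> real) set" where
  "partition_polytope n = conv_hull (pt ` partitions n)"

definition C2 :: "nat \<Rightarrow> (nat \<Rightarrow> nat) set" where
  "C2 n = {x \<in> partitions n. \<not> is_vertex (partition_polytope n) (pt x) \<and>
     (\<exists>y\<in>partitions n. \<exists>z\<in>partitions n. y \<noteq> x \<and> z \<noteq> x \<and>
        (\<exists>t::real. 0 < t \<and> t < 1 \<and> pt x = (\<lambda>i. t * pt y i + (1 - t) * pt z i)))}"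

definition metropolis2 :: "nat \<Rightarrow> (nat \<Rightarrow> nat) \<Rightarrow> bool" where
  "metropolis2 m x \<longleftrightarrow> 0 < m \<and> even m \<and>
     (\<exists>y\<in>partitions (m div 2). \<exists>z\<in>partitions (m div 2). x = (\<lambda>i. y i + z i))"

definition extends_partition :: "(nat \<Rightarrow> nat) \<Rightarrow> (nat \<Rightarrow> nat) \<Rightarrow> bool" where
  "extends_partition x y \<longleftrightarrow> (\<forall>i. y i \<le> x i)"

end

theory Submission
  imports Defs
begin

text \<open>Write \<open>x = t y + (1 - t) z\<close> with \<open>y, z \<noteq> x\<close>; after swapping \<open>y\<close> and \<open>z\<close> we may assume
  \<open>t \<le> 1/2\<close>. Then \<open>|x\<^sub>i - z\<^sub>i| \<le> x\<^sub>i\<close> for every \<open>i\<close>: if \<open>z\<^sub>i > x\<^sub>i\<close> then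
  \<open>z\<^sub>i - x\<^sub>i = t (z\<^sub>i - y\<^sub>i) \<le> (1 - t) (z\<^sub>i - y\<^sub>i) = x\<^sub>i - y\<^sub>i\<close>. Since \<open>x\<close> and \<open>z\<close> are both
  partitions of \<open>n\<close>, the positive and the negative part of \<open>x - z\<close> are partitions of one and the
  same \<open>k > 0\<close>, so their union is a Metropolis 2-partition of \<open>2k\<close> contained in \<open>x\<close>. Either
  \<open>2k < n\<close>, or it exhausts \<open>x\<close>.\<close>

lemma partitions_support:
  "x \<in> partitions n \<Longrightarrow> x i \<noteq> 0 \<Longrightarrow> i \<in> {1..n}"
  by (simp add: partitions_def)

lemma weight_eq_sum_over_support:
  fixes x :: "nat \<Rightarrow> nat"
  assumes "\<And>i. x i \<noteq> 0 \<Longrightarrow> i \<in> {1..N}"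
  shows "(\<Sum>i=1..N. i * x i) = (\<Sum>i | x i \<noteq> 0. i * x i)"
  using assms by (intro sum.mono_neutral_right) auto

lemma partitions_weight:
  assumes x: "x \<in> partitions n" and supp: "\<And>i. x i \<noteq> 0 \<Longrightarrow> i \<in> {1..N}"
  shows "(\<Sum>i=1..N. i * x i) = n"
proof -
  have "(\<Sum>i=1..N. i * x i) = (\<Sum>i | x i \<noteq> 0. i * x i)"
    using weight_eq_sum_over_support[OF supp] .
  also have "\<dots> = (\<Sum>i=1..n. i * x i)"
    using weight_eq_sum_over_support[OF partitions_support[OF x]] by simp
  also have "\<dots> = n"
    using x by (simp add: partitions_def)
  finally show ?thesis .
qed

lemma partitionsI:
  assumes supp: "\<And>i. x i \<noteq> 0 \<Longrightarrow> i \<in> {1..N}" and weight: "(\<Sum>i=1..N. i * x i) = k"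
  shows "x \<in> partitions k"
proof -
  have supp_k: "i \<in> {1..k}" if "x i \<noteq> 0" for i
  proof -
    have "i \<le> i * x i"
      using that by simp
    also have "\<dots> \<le> (\<Sum>i=1..N. i * x i)"
      using supp[OF that] by (intro member_le_sum) auto
    finally have "i \<le> k"
      unfolding weight .
    then show ?thesis
      using supp[OF that] by simp
  qed
  have "(\<Sum>i=1..k. i * x i) = (\<Sum>i | x i \<noteq> 0. i * x i)"
    using weight_eq_sum_over_support[OF supp_k] .
  also have "\<dots> = (\<Sum>i=1..N. i * x i)"
    using weight_eq_sum_over_support[OF supp] by (rule sym)
  finally show ?thesis
    using supp_k weight by (simp add: partitions_def)
qed

lemma partitions_0: "partitions 0 = {\<lambda>_. 0}"
  by (auto simp: partitions_def)

lemma partitions_add: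
  assumes x: "x \<in> partitions k" and y: "y \<in> partitions l"
  shows "(\<lambda>i. x i + y i) \<in> partitions (k + l)"
proof (rule partitionsI)
  show supp: "i \<in> {1..k + l}" if "x i + y i \<noteq> 0" for i
    using that partitions_support[OF x, of i] partitions_support[OF y, of i]
    by (cases "x i = 0") auto
  have "i \<in> {1..k + l}" if "x i \<noteq> 0" for i
    using supp that by simp
  moreover have "i \<in> {1..k + l}" if "y i \<noteq> 0" for i
    using supp that by simp
  ultimately have "(\<Sum>i=1..k + l. i * x i) = k" "(\<Sum>i=1..k + l. i * y i) = l"
    using partitions_weight[OF x] partitions_weight[OF y] by blast+
  then show "(\<Sum>i=1..k + l. i * (x i + y i)) = k + l"
    by (simp add: distrib_left sum.distrib)
qed

lemma metropolis2_imp_partitions: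
  assumes "metropolis2 m x"
  shows "x \<in> partitions m"
proof -
  from assms obtain y z where "even m" "y \<in> partitions (m div 2)" "z \<in> partitions (m div 2)"
    and "x = (\<lambda>i. y i + z i)"
    unfolding metropolis2_def by blast
  moreover have "m div 2 + m div 2 = m"
    using \<open>even m\<close> by auto
  ultimately show ?thesis
    using partitions_add[of y "m div 2" z "m div 2"] by simp
qed

lemma partitions_le_imp_less_or_eq:
  assumes x: "x \<in> partitions n" and y: "y \<in> partitions m" and le: "\<And>i. y i \<le> x i"
  shows "m < n \<or> m = n \<and> y = x"
proof -
  have supp_y: "i \<in> {1..n}" if "y i \<noteq> 0" for i
    using le[of i] that partitions_support[OF x, of i] by simp
  have weight_x: "(\<Sum>i=1..n. i * x i) = n"
    using x by (simp add: partitions_def)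
  have weight_y: "(\<Sum>i=1..n. i * y i) = m"
    using partitions_weight[OF y supp_y] .
  have weight_diff: "(\<Sum>i=1..n. i * (x i - y i)) = n - m"
    using le weight_x weight_y by (simp add: diff_mult_distrib2 sum_subtractf_nat)
  have "m = (\<Sum>i=1..n. i * y i)"
    using weight_y ..
  also have "\<dots> \<le> (\<Sum>i=1..n. i * x i)"
    using le by (intro sum_mono) simp
  finally have "m \<le> n"
    unfolding weight_x .
  moreover have "y = x" if "m = n"
  proof
    fix i
    show "y i = x i"
    proof (cases "i \<in> {1..n}")
      case True
      then have "i * (x i - y i) = 0"
        using weight_diff \<open>m = n\<close> by simp
      with True le[of i] show ?thesis
        by simp
    next
      case False
      then have "x i = 0"
        using partitions_support[OF x, of i] by blast
      with le[of i] show ?thesis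
        by simp
    qed
  qed
  ultimately show ?thesis
    by linarith
qed

lemma metropolis2_difference:
  assumes x: "x \<in> partitions n" and z: "z \<in> partitions n" and "x \<noteq> z"
  shows "\<exists>k. metropolis2 (2 * k) (\<lambda>i. (x i - z i) + (z i - x i))"
proof -
  define k where "k = (\<Sum>i=1..n. i * (x i - z i))"
  have supp: "i \<in> {1..n}" if "x i \<noteq> 0 \<or> z i \<noteq> 0" for i
    using that partitions_support[OF x, of i] partitions_support[OF z, of i] by blast
  have "x i + (z i - x i) = z i + (x i - z i)" for i
    by linarith
  then have "(\<Sum>i=1..n. i * x i) + (\<Sum>i=1..n. i * (z i - x i))
      = (\<Sum>i=1..n. i * z i) + (\<Sum>i=1..n. i * (x i - z i))"
    by (simp add: sum.distrib[symmetric] distrib_left[symmetric])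
  then have weight_neg: "(\<Sum>i=1..n. i * (z i - x i)) = k"
    using x z k_def by (simp add: partitions_def)
  have pos: "(\<lambda>i. x i - z i) \<in> partitions k"
    using supp k_def by (intro partitionsI[of _ n]) auto
  have neg: "(\<lambda>i. z i - x i) \<in> partitions k"
    using supp weight_neg by (intro partitionsI[of _ n]) auto
  have "k \<noteq> 0"
  proof
    assume "k = 0"
    then have "x i - z i = 0" "z i - x i = 0" for i
      using pos neg partitions_0 by (metis singletonD)+
    then show False
      using \<open>x \<noteq> z\<close> by (meson antisym diff_is_0_eq ext)
  qed
  then have "metropolis2 (2 * k) (\<lambda>i. (x i - z i) + (z i - x i))"
    unfolding metropolis2_def using pos neg by fastforce
  then show ?thesis ..
qed

lemma convex_combination_diff_le:
  fixes a b c :: nat and t :: real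
  assumes "0 \<le> t" "t \<le> 1/2" and comb: "real a = t * real b + (1 - t) * real c"
  shows "(a - c) + (c - a) \<le> a"
proof (cases "c \<le> a")
  case False
  have diff_ca: "real c - real a = t * (real c - real b)"
    using comb by (simp add: algebra_simps)
  have diff_ab: "real a - real b = (1 - t) * (real c - real b)"
    using comb by (simp add: algebra_simps)
  have "0 < t * (real c - real b)"
    using diff_ca False by simp
  then have "0 \<le> real c - real b"
    using \<open>0 \<le> t\<close> by (simp add: zero_less_mult_iff)
  then have "t * (real c - real b) \<le> (1 - t) * (real c - real b)"
    using \<open>t \<le> 1/2\<close> by (intro mult_right_mono) auto
  then have "real c - real a \<le> real a"
    using diff_ca diff_ab by linarith
  then show ?thesis
    using False by linarith
qed simp

theorem theorem5:
  fixes n :: nat and x :: "nat \<Rightarrow> nat"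
  assumes "0 < n" and "x \<in> C2 n"
  shows "metropolis2 n x \<or>
         (\<exists>m y. m < n \<and> y \<in> partitions m \<and> metropolis2 m y \<and> extends_partition x y)"
proof -
  from assms(2) obtain y z t where x: "x \<in> partitions n" and "y \<in> partitions n" "z \<in> partitions n"
    and "y \<noteq> x" "z \<noteq> x" "0 < t" "t < 1" and "pt x = (\<lambda>i. t * pt y i + (1 - t) * pt z i)"
    unfolding C2_def by blast
  then have comb: "real (x i) = t * real (y i) + (1 - t) * real (z i)" for i
    by (simp add: pt_def fun_eq_iff)
  obtain w u s where w: "w \<in> partitions n" "w \<noteq> x" and s: "0 \<le> s" "s \<le> 1/2"
    and comb_w: "\<And>i. real (x i) = s * real (u i) + (1 - s) * real (w i)"
  proof (cases "t \<le> 1/2")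
    case True
    then show thesis
      using that[of z t y] comb \<open>z \<in> partitions n\<close> \<open>z \<noteq> x\<close> \<open>0 < t\<close> by simp
  next
    case False
    then show thesis
      using that[of y "1 - t" z] comb \<open>y \<in> partitions n\<close> \<open>y \<noteq> x\<close> \<open>t < 1\<close>
      by (simp add: algebra_simps)
  qed
  define Y where "Y = (\<lambda>i. (x i - w i) + (w i - x i))"
  obtain k where met: "metropolis2 (2 * k) Y"
    using metropolis2_difference[OF x w(1)] w(2) unfolding Y_def by metis
  have le: "Y i \<le> x i" for i
    unfolding Y_def using convex_combination_diff_le[OF s comb_w] .
  have Y: "Y \<in> partitions (2 * k)"
    using metropolis2_imp_partitions[OF met] .
  show ?thesis
    using partitions_le_imp_less_or_eq[OF x Y le] met Y le
    by (auto simp: extends_partition_def)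
qed

end
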